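(* Let $1\le p\le q$, $n=p+q$, and let $\mu=(a_1,\dots,a_p\mid b_1,\dots,b_q)\in\mathbb{Z}^n$ be $\Delta^+(\mathfrak{k},\mathfrak{t})$-dominant with $\mu-\beta$ also $\Delta^+(\mathfrak{k},\mathfrak{t})$-dominant, and suppose $\mu\in\Lambda_{f,g}$ for some $1\le f\le p$, $1\le g\le q$. Let $\tau=(k_1,\dots,k_p\mid r_1,\dots,r_q)\in\Omega_{p,q}$. (a) If $\mu$ is a $\partial R$-weight and $k_1>a_1$, then there exists $\tau'=(k'_1,\dots,k'_p\mid r'_1,\dots,r'_q)\in\Omega_{p,q}$ with $\{\mu-\tau\}\gg\{\mu-\tau'\}$ and $$(k'_1,\dots,k'_p)=(a_1,\underbrace{a_1-1,\dots,a_1-1}_{h-1},k_{h+1},\dots,k_p),$$ where $h$ is the largest index with $k_h\ge a_1$. (b) If $\mu$ is a $\partial L$-weight and $r_1>b_1$, then there exists $\tau'=(k'_1,\dots,k'_p\mid r'_1,\dots,r'_q)\in\Omega_{p,q}$ with $\{\mu-\tau\}\gg\{\mu-\tau'\}$ and $$(r'_1,\dots,r'_q)=(b_1,\underbrace{b_1-1,\dots,b_1-1}_{h-1},r_{h+1},\dots,r_q),$$ where $h$ is the largest index with $r_h\ge b_1$.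
   Context: $\Delta^+(\mathfrak{k},\mathfrak{t})$-dominant means $a_1\ge\cdots\ge a_p\ge0$ and $b_1\ge\cdots\ge b_q\ge0$; $\beta=(1,0,\dots,0\mid1,0,\dots,0)$. $\Lambda_{f,g}$ is the set of such $\mu$ with $\sum_{i=1}^f a_i+\sum_{j=1}^g b_j>2pq-2(p-f)(q-g)$. $\mu$ is a $\partial R$-weight if $q\ge a_1\ge1$, $2p\ge b_1\ge p+1$ and $a_1+b_1\le 2p+q-1$; a $\partial L$-weight if $2q\ge a_1\ge q+1$, $p\ge b_1\ge 1$ and $a_1+b_1\le p+2q-1$. $\Omega_{p,q}$ is the set of $(x\mid y)\in\mathbb{Z}^n$ with $q\ge x_1\ge\cdots\ge x_p\ge0$ and $y_j=\#\{i\mid q-x_i\ge j\}$ ($1\le j\le q$). For $\nu\in\mathbb{Z}^n$, $\{\nu\}$ is obtained by taking absolute values of all coordinates and sorting the first $p$ and the last $q$ coordinates separately in decreasing order. $u\gg v$ means $u_i\ge v_i$ for all $i$ with strict inequality for some $i$. *)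

theory Defs
  imports Main
begin

text \<open>A weight (x_1,...,x_p | y_1,...,y_q) in Z^n, n = p+q, is represented by two
  int lists xs (length p) and ys (length q); list index i corresponds to coordinate i+1.\<close>

definition k_dominant :: "int list \<Rightarrow> int list \<Rightarrow> bool" where
  "k_dominant xs ys \<longleftrightarrow>
     sorted_wrt (\<ge>) xs \<and> (\<forall>x\<in>set xs. 0 \<le> x) \<and>
     sorted_wrt (\<ge>) ys \<and> (\<forall>y\<in>set ys. 0 \<le> y)"

text \<open>subtract beta = (1,0,...,0 | 1,0,...,0) from a nonempty weight\<close>
definition minus_beta :: "int list \<Rightarrow> int list" where
  "minus_beta xs = xs[0 := xs ! 0 - 1]"

definition in_Lambda :: "nat \<Rightarrow> nat \<Rightarrow> nat \<Rightarrow> nat \<Rightarrow> int list \<Rightarrow> int list \<Rightarrow> bool" where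
  "in_Lambda p q f g xs ys \<longleftrightarrow> k_dominant xs ys \<and>
     sum_list (take f xs) + sum_list (take g ys)
       > 2 * int p * int q - 2 * (int p - int f) * (int q - int g)"

definition dR_weight :: "nat \<Rightarrow> nat \<Rightarrow> int list \<Rightarrow> int list \<Rightarrow> bool" where
  "dR_weight p q xs ys \<longleftrightarrow>
     int q \<ge> xs ! 0 \<and> xs ! 0 \<ge> 1 \<and> 2 * int p \<ge> ys ! 0 \<and> ys ! 0 \<ge> int p + 1 \<and>
     xs ! 0 + ys ! 0 \<le> 2 * int p + int q - 1"

definition dL_weight :: "nat \<Rightarrow> nat \<Rightarrow> int list \<Rightarrow> int list \<Rightarrow> bool" where
  "dL_weight p q xs ys \<longleftrightarrow>
     2 * int q \<ge> xs ! 0 \<and> xs ! 0 \<ge> int q + 1 \<and> int p \<ge> ys ! 0 \<and> ys ! 0 \<ge> 1 \<and>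
     xs ! 0 + ys ! 0 \<le> int p + 2 * int q - 1"

definition in_Omega :: "nat \<Rightarrow> nat \<Rightarrow> int list \<Rightarrow> int list \<Rightarrow> bool" where
  "in_Omega p q xs ys \<longleftrightarrow>
     length xs = p \<and> length ys = q \<and>
     (\<forall>x\<in>set xs. x \<le> int q \<and> 0 \<le> x) \<and> sorted_wrt (\<ge>) xs \<and>
     (\<forall>j<q. ys ! j = int (card {i. i < p \<and> int q - xs ! i \<ge> int (j + 1)}))"

definition brace :: "int list \<Rightarrow> int list \<Rightarrow> int list" where
  "brace xs ys = rev (sort (map abs xs)) @ rev (sort (map abs ys))"

definition gg :: "int list \<Rightarrow> int list \<Rightarrow> bool" (infix "\<ggreater>" 50) where
  "u \<ggreater> v \<longleftrightarrow> length u = length v \<and> (\<forall>i<length u. u ! i \<ge> v ! i) \<and>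
     (\<exists>i<length u. u ! i > v ! i)"

definition vminus :: "int list \<Rightarrow> int list \<Rightarrow> int list" where
  "vminus u v = map2 (-) u v"

text \<open>largest (1-based) index h with xs_h \<ge> c\<close>
definition last_ge :: "int list \<Rightarrow> int \<Rightarrow> nat" where
  "last_ge xs c = (GREATEST h. 1 \<le> h \<and> h \<le> length xs \<and> xs ! (h - 1) \<ge> c)"

end

theory Submission
  imports Defs "HOL-Library.Multiset"
begin

(* Membership in \<Omega>_{p,q} says that r_j counts the i with k_i \<le> q - j; as k is
  decreasing this is the duality  q < k_i + j  iff  r_j + i \<le> p,  so \<Omega>_{p,q} is symmetric under
  exchanging (p, k) with (q, r). The hypotheses are symmetric as well (a \<partial>L-weight (a | b) is a
  \<partial>R-weight (b | a)), hence part (b) is part (a) for the swapped data.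

  For (a), replacing k by k' = (a_1, a_1 - 1, ..., a_1 - 1, k_{h+1}, ...) moves every k_i towards a_i,
  since a_i < a_1 for i > 1 by the dominance of \<mu> - \<beta>, and can only raise the dual entries r_j.
  Only the r_j with j \<le> q - a_1 + 1 change, and there the \<Lambda>_{f,g} inequality forces
  b_j \<ge> b_{q-a_1+1} \<ge> p \<ge> r'_j, so |b_j - r_j| does not grow either. Sorting absolute values is
  monotone, so {\<mu> - \<tau>'} \<le> {\<mu> - \<tau>} entrywise, and the total sum drops because the first
  coordinate goes from |a_1 - k_1| > 0 to 0. *)

lemma downward_closed_iff_less_card:
  assumes down: "\<And>i j. i \<le> j \<Longrightarrow> j < n \<Longrightarrow> P j \<Longrightarrow> P i" and "i < n"
  shows "P i \<longleftrightarrow> i < card {j. j < n \<and> P j}"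
proof
  assume "P i"
  then have "{..i} \<subseteq> {j. j < n \<and> P j}"
    using down[of _ i] \<open>i < n\<close> by auto
  then show "i < card {j. j < n \<and> P j}"
    using card_mono[of "{j. j < n \<and> P j}" "{..i}"] by simp
next
  assume "i < card {j. j < n \<and> P j}"
  show "P i"
  proof (rule ccontr)
    assume "\<not> P i"
    then have "{j. j < n \<and> P j} \<subseteq> {..<i}"
      using down[of i] by (force simp: not_less[symmetric])
    then show False
      using card_mono[of "{..<i}" "{j. j < n \<and> P j}"] \<open>i < card _\<close> by simp
  qed
qed

lemma sorted_wrt_ge_nth_antimono:
  fixes xs :: "'a::preorder list"
  assumes "sorted_wrt (\<ge>) xs" and "i \<le> j" and "j < length xs"
  shows "xs ! j \<le> xs ! i"
  using assms sorted_wrt_nth_less[OF assms(1), of i j] by (cases "i = j") auto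

lemma sort_nth_le_iff:
  fixes xs :: "'a::linorder list"
  assumes "i < length xs"
  shows "sort xs ! i \<le> c \<longleftrightarrow> i < length (filter (\<lambda>x. x \<le> c) xs)"
proof -
  have "length (filter (\<lambda>x. x \<le> c) xs) = card {j. j < length xs \<and> sort xs ! j \<le> c}"
    using length_filter_conv_card[of "\<lambda>x. x \<le> c" "sort xs"] by (simp add: filter_sort)
  moreover have "sort xs ! i \<le> c \<longleftrightarrow> i < card {j. j < length xs \<and> sort xs ! j \<le> c}"
  proof (rule downward_closed_iff_less_card)
    fix i' j assume "i' \<le> j" "j < length xs" "sort xs ! j \<le> c"
    then show "sort xs ! i' \<le> c"
      using sorted_nth_mono[OF sorted_sort, of i' j xs] by simp
  qed (rule assms)
  ultimately show ?thesis
    by simp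
qed

lemma list_all2_sort:
  fixes xs ys :: "'a::linorder list"
  assumes "list_all2 (\<le>) xs ys"
  shows "list_all2 (\<le>) (sort xs) (sort ys)"
proof -
  have count_mono: "length (filter (\<lambda>y. y \<le> c) ys) \<le> length (filter (\<lambda>x. x \<le> c) xs)" for c
    using assms by (induction rule: list_all2_induct) auto
  have "sort xs ! i \<le> sort ys ! i" if "i < length xs" for i
    using that assms count_mono[of "sort ys ! i"]
      sort_nth_le_iff[of i xs "sort ys ! i"] sort_nth_le_iff[of i ys "sort ys ! i"]
    by (simp add: list_all2_lengthD)
  then show ?thesis
    using assms by (simp add: list_all2_conv_all_nth)
qed

lemma sum_list_strict_mono:
  fixes xs ys :: "'a::ordered_cancel_comm_monoid_add list"
  assumes "list_all2 (\<le>) xs ys" and "xs \<noteq> ys"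
  shows "sum_list xs < sum_list ys"
  using assms
proof (induction rule: list_all2_induct)
  case (Cons x xs y ys)
  show ?case
  proof (cases "xs = ys")
    case True
    with Cons have "x < y"
      by (simp add: order.strict_iff_order)
    then show ?thesis
      using True by (simp add: add_strict_right_mono)
  next
    case False
    then show ?thesis
      using Cons by (simp add: add_le_less_mono)
  qed
qed simp

lemma list_all2_le_sort_eq_imp_eq:
  fixes xs ys :: "'a::{linorder, ordered_cancel_comm_monoid_add} list"
  assumes "list_all2 (\<le>) xs ys" and "sort xs = sort ys"
  shows "xs = ys"
proof (rule ccontr)
  assume "xs \<noteq> ys"
  with assms(1) have "sum_list xs < sum_list ys"
    by (rule sum_list_strict_mono)
  moreover have "sum_list (sort xs) = sum_list xs" "sum_list (sort ys) = sum_list ys"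
    by (metis mset_sort sum_mset_sum_list)+
  ultimately show False
    using assms(2) by simp
qed

lemma gg_iff_list_all2: "u \<ggreater> v \<longleftrightarrow> list_all2 (\<le>) v u \<and> u \<noteq> v"
proof
  assume "u \<ggreater> v"
  then show "list_all2 (\<le>) v u \<and> u \<noteq> v"
    unfolding gg_def list_all2_conv_all_nth by fastforce
next
  assume le: "list_all2 (\<le>) v u \<and> u \<noteq> v"
  then have len: "length v = length u"
    using list_all2_lengthD by blast
  with le obtain i where i: "i < length u" "u ! i \<noteq> v ! i"
    by (metis nth_equalityI)
  with le len have "v ! i < u ! i"
    by (simp add: list_all2_nthD order.strict_iff_order)
  with i le len show "u \<ggreater> v"
    unfolding gg_def list_all2_conv_all_nth by auto
qed

lemma brace_gg_if_abs_le:
  fixes u u' v v' :: "int list"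
  assumes u: "list_all2 (\<lambda>x y. \<bar>x\<bar> \<le> \<bar>y\<bar>) u' u"
    and v: "list_all2 (\<lambda>x y. \<bar>x\<bar> \<le> \<bar>y\<bar>) v' v"
    and neq: "map abs u' \<noteq> map abs u \<or> map abs v' \<noteq> map abs v"
  shows "brace u v \<ggreater> brace u' v'"
proof -
  have le_u: "list_all2 (\<le>) (map abs u') (map abs u)"
    using u by (simp add: list_all2_map1 list_all2_map2)
  have le_v: "list_all2 (\<le>) (map abs v') (map abs v)"
    using v by (simp add: list_all2_map1 list_all2_map2)
  have "list_all2 (\<le>) (brace u' v') (brace u v)"
    unfolding brace_def using le_u le_v by (simp add: list_all2_appendI list_all2_sort)
  moreover have "brace u' v' \<noteq> brace u v"
  proof
    assume "brace u' v' = brace u v"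
    then have "sort (map abs u') = sort (map abs u)" "sort (map abs v') = sort (map abs v)"
      using list_all2_lengthD[OF u] by (simp_all add: brace_def append_eq_append_conv)
    then show False
      using neq le_u le_v list_all2_le_sort_eq_imp_eq by blast
  qed
  ultimately show ?thesis
    by (simp add: gg_iff_list_all2)
qed

lemma brace_gg_swap:
  assumes "length u = length u'" and "length v = length v'"
  shows "brace u v \<ggreater> brace u' v' \<longleftrightarrow> brace v u \<ggreater> brace v' u'"
  using assms by (auto simp: gg_iff_list_all2 brace_def list_all2_append append_eq_append_conv)

lemma list_all2_vminus_iff:
  assumes "length u = n" "length v = n" "length u' = n" "length v' = n"
  shows "list_all2 P (vminus u v) (vminus u' v') \<longleftrightarrow>
    (\<forall>i<n. P (u ! i - v ! i) (u' ! i - v' ! i))"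
  using assms by (simp add: vminus_def list_all2_conv_all_nth)

lemma in_Omega_nth_le:
  assumes "in_Omega p q k r" and "j < q"
  shows "0 \<le> r ! j" and "r ! j \<le> int p"
proof -
  have "card {i. i < p \<and> int (j + 1) \<le> int q - k ! i} \<le> card {..<p}"
    by (rule card_mono) auto
  then show "0 \<le> r ! j" "r ! j \<le> int p"
    using assms by (auto simp: in_Omega_def)
qed

lemma in_Omega_dual_iff:
  assumes Om: "in_Omega p q k r" and "i < p" and "j < q"
  shows "int q \<le> k ! i + int j \<longleftrightarrow> r ! j + int i < int p"
proof -
  define D where "D = {i. i < p \<and> int q \<le> k ! i + int j}"
  have "{i. i < p \<and> int (j + 1) \<le> int q - k ! i} = {..<p} - D"
    by (auto simp: D_def)
  moreover have "D \<subseteq> {..<p}"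
    by (auto simp: D_def)
  ultimately have "r ! j = int (p - card D)"
    using Om \<open>j < q\<close> by (simp add: in_Omega_def card_Diff_subset finite_subset)
  moreover have "card D \<le> p"
    using card_mono[OF _ \<open>D \<subseteq> {..<p}\<close>] by simp
  moreover have "int q \<le> k ! i + int j \<longleftrightarrow> i < card D"
    unfolding D_def
  proof (rule downward_closed_iff_less_card)
    fix i' i'' assume "i' \<le> i''" "i'' < p" "int q \<le> k ! i'' + int j"
    then show "int q \<le> k ! i' + int j"
      using sorted_wrt_ge_nth_antimono[of k i' i''] Om by (auto simp: in_Omega_def)
  qed (rule \<open>i < p\<close>)
  ultimately show ?thesis
    by linarith
qed

lemma in_Omega_swap:
  assumes Om: "in_Omega p q k r"
  shows "in_Omega q p r k"
proof -
  have lk: "length k = p" and lr: "length r = q"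
    and k_bounds: "\<forall>x\<in>set k. x \<le> int q \<and> 0 \<le> x"
    using Om by (auto simp: in_Omega_def)
  have r_bounds: "\<forall>y\<in>set r. y \<le> int p \<and> 0 \<le> y"
    using in_Omega_nth_le[OF Om] lr by (auto simp: in_set_conv_nth)
  have "r ! j' \<le> r ! j" if "j < j'" "j' < q" for j j'
  proof -
    have sub: "{i. i < p \<and> int (j' + 1) \<le> int q - k ! i}
        \<subseteq> {i. i < p \<and> int (j + 1) \<le> int q - k ! i}"
      using that by auto
    show ?thesis
      using Om that card_mono[OF _ sub] by (simp add: in_Omega_def)
  qed
  then have r_sorted: "sorted_wrt (\<ge>) r"
    using lr by (simp add: sorted_wrt_iff_nth_less)
  have "k ! i = int (card {j. j < q \<and> int (i + 1) \<le> int p - r ! j})" if "i < p" for i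
  proof -
    have "{j. j < q \<and> int (i + 1) \<le> int p - r ! j} = {nat (int q - k ! i)..<q}"
      using in_Omega_dual_iff[OF Om \<open>i < p\<close>] by force
    moreover have "0 \<le> k ! i" "k ! i \<le> int q"
      using k_bounds lk that by auto
    ultimately show ?thesis
      by simp
  qed
  then show ?thesis
    using lk lr r_bounds r_sorted by (simp add: in_Omega_def)
qed

lemma in_Omega_exists:
  assumes "length k = p" and "\<forall>x\<in>set k. x \<le> int q \<and> 0 \<le> x" and "sorted_wrt (\<ge>) k"
  shows "\<exists>r. in_Omega p q k r"
  using assms
  by (intro exI[of _ "map (\<lambda>j. int (card {i. i < p \<and> int (j + 1) \<le> int q - k ! i})) [0..<q]"])
    (simp add: in_Omega_def)

lemma in_Omega_dual_antimono:
  assumes "in_Omega p q k r" and "in_Omega p q k' r'"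
    and "\<And>i. i < p \<Longrightarrow> k' ! i \<le> k ! i" and "j < q"
  shows "r ! j \<le> r' ! j"
proof -
  have sub: "{i. i < p \<and> int (j + 1) \<le> int q - k ! i}
      \<subseteq> {i. i < p \<and> int (j + 1) \<le> int q - k' ! i}"
    using assms(3) by force
  show ?thesis
    using assms card_mono[OF _ sub] by (simp add: in_Omega_def)
qed

lemma last_ge_iff:
  fixes xs :: "int list"
  assumes sorted: "sorted_wrt (\<ge>) xs" and "xs \<noteq> []" and "c \<le> xs ! 0"
  shows "1 \<le> last_ge xs c" and "last_ge xs c \<le> length xs"
    and "\<And>i. i < length xs \<Longrightarrow> c \<le> xs ! i \<longleftrightarrow> i < last_ge xs c"
proof -
  define n where "n = card {i. i < length xs \<and> c \<le> xs ! i}"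
  have iff: "c \<le> xs ! i \<longleftrightarrow> i < n" if "i < length xs" for i
    unfolding n_def
  proof (rule downward_closed_iff_less_card)
    fix i' j assume "i' \<le> j" "j < length xs" "c \<le> xs ! j"
    then show "c \<le> xs ! i'"
      using sorted_wrt_ge_nth_antimono[OF sorted] by (meson order_trans)
  qed (rule that)
  have "n \<le> length xs"
    using card_mono[of "{..<length xs}" "{i. i < length xs \<and> c \<le> xs ! i}"] by (auto simp: n_def)
  moreover have "0 < n"
    using iff[of 0] assms by simp
  moreover from calculation have "last_ge xs c = n"
    unfolding last_ge_def by (intro Greatest_equality) (auto simp: iff)
  ultimately show "1 \<le> last_ge xs c" "last_ge xs c \<le> length xs"
    "\<And>i. i < length xs \<Longrightarrow> c \<le> xs ! i \<longleftrightarrow> i < last_ge xs c"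
    using iff by auto
qed

definition lower_prefix :: "int \<Rightarrow> nat \<Rightarrow> int list \<Rightarrow> int list" where
  "lower_prefix c h xs = c # replicate (h - 1) (c - 1) @ drop h xs"

lemma
  fixes xs :: "int list"
  assumes "sorted_wrt (\<ge>) xs" and "xs \<noteq> []" and "c \<le> xs ! 0"
  shows length_lower_prefix_last_ge: "length (lower_prefix c (last_ge xs c) xs) = length xs"
    and nth_lower_prefix_last_ge: "i < length xs \<Longrightarrow> lower_prefix c (last_ge xs c) xs ! i =
      (if i = 0 then c else if c \<le> xs ! i then c - 1 else xs ! i)"
proof -
  note h = last_ge_iff[OF assms]
  show "length (lower_prefix c (last_ge xs c) xs) = length xs"
    using h(1,2) by (simp add: lower_prefix_def)
  assume "i < length xs"
  then show "lower_prefix c (last_ge xs c) xs ! i =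
      (if i = 0 then c else if c \<le> xs ! i then c - 1 else xs ! i)"
    using h(1,2) h(3)[of i] by (auto simp: lower_prefix_def nth_Cons' nth_append)
qed

lemma in_Omega_lower_prefix:
  assumes Om: "in_Omega p q k r" and "0 < p" and "1 \<le> c" and "c \<le> k ! 0"
  shows "\<exists>r'. in_Omega p q (lower_prefix c (last_ge k c) k) r'"
proof -
  have lk: "length k = p" and k_sorted: "sorted_wrt (\<ge>) k"
    and k_bounds: "\<forall>x\<in>set k. x \<le> int q \<and> 0 \<le> x"
    using Om by (auto simp: in_Omega_def)
  have "k \<noteq> []"
    using lk \<open>0 < p\<close> by auto
  define k' where "k' = lower_prefix c (last_ge k c) k"
  have lk': "length k' = p"
    using length_lower_prefix_last_ge[OF k_sorted \<open>k \<noteq> []\<close> \<open>c \<le> k ! 0\<close>] lk by (simp add: k'_def)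
  have k'_nth: "k' ! i = (if i = 0 then c else if c \<le> k ! i then c - 1 else k ! i)" if "i < p" for i
    using nth_lower_prefix_last_ge[OF k_sorted \<open>k \<noteq> []\<close> \<open>c \<le> k ! 0\<close>] lk that by (simp add: k'_def)
  show ?thesis
    unfolding k'_def[symmetric]
  proof (rule in_Omega_exists[OF lk'])
    show "\<forall>x\<in>set k'. x \<le> int q \<and> 0 \<le> x"
    proof
      fix x assume "x \<in> set k'"
      then obtain i where i: "i < p" "x = k' ! i"
        using lk' by (auto simp: in_set_conv_nth)
      have "k ! i \<le> int q" "0 \<le> k ! i"
        using k_bounds nth_mem[of i k] i lk by auto
      then show "x \<le> int q \<and> 0 \<le> x"
        using i k'_nth[OF i(1)] \<open>1 \<le> c\<close> \<open>c \<le> k ! 0\<close> by auto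
    qed
    have "k' ! j \<le> k' ! i" if "i < j" "j < p" for i j
      using k'_nth[of i] k'_nth[of j] that sorted_wrt_ge_nth_antimono[OF k_sorted, of i j] lk by auto
    then show "sorted_wrt (\<ge>) k'"
      using lk' by (simp add: sorted_wrt_iff_nth_less)
  qed
qed

lemma lower_prefix_abs_diff_le:
  fixes a k :: "int list"
  assumes k_sorted: "sorted_wrt (\<ge>) k" and "k \<noteq> []" and la: "length a = length k"
    and a_head: "\<And>i. 0 < i \<Longrightarrow> i < length k \<Longrightarrow> a ! i < a ! 0" and a0_less: "a ! 0 < k ! 0"
  shows "list_all2 (\<lambda>x y. \<bar>x\<bar> \<le> \<bar>y\<bar>)
      (vminus a (lower_prefix (a ! 0) (last_ge k (a ! 0)) k)) (vminus a k)"
    and "map abs (vminus a (lower_prefix (a ! 0) (last_ge k (a ! 0)) k)) \<noteq> map abs (vminus a k)"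
proof -
  define k' where "k' = lower_prefix (a ! 0) (last_ge k (a ! 0)) k"
  have lk': "length k' = length k"
    using length_lower_prefix_last_ge[OF k_sorted \<open>k \<noteq> []\<close>] a0_less by (simp add: k'_def)
  have k'_nth: "k' ! i = (if i = 0 then a ! 0 else if a ! 0 \<le> k ! i then a ! 0 - 1 else k ! i)"
    if "i < length k" for i
    using nth_lower_prefix_last_ge[OF k_sorted \<open>k \<noteq> []\<close>] a0_less that by (simp add: k'_def)
  show "list_all2 (\<lambda>x y. \<bar>x\<bar> \<le> \<bar>y\<bar>) (vminus a k') (vminus a k)"
    unfolding list_all2_vminus_iff[OF la lk' la refl]
  proof (intro allI impI)
    fix i assume i: "i < length k"
    show "\<bar>a ! i - k' ! i\<bar> \<le> \<bar>a ! i - k ! i\<bar>"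
      using k'_nth[OF i] a_head[OF _ i] a0_less by auto
  qed
  have "0 < length k"
    using \<open>k \<noteq> []\<close> by simp
  then have "map abs (vminus a k') ! 0 \<noteq> map abs (vminus a k) ! 0"
    using k'_nth[of 0] la lk' a0_less by (simp add: vminus_def)
  then show "map abs (vminus a k') \<noteq> map abs (vminus a k)"
    by metis
qed

lemma in_Omega_abs_diff_dual_le:
  fixes b r r' :: "int list"
  assumes Om: "in_Omega p q k r" and Om': "in_Omega p q k' r'" and lb: "length b = q"
    and k'_le: "\<And>i. i < p \<Longrightarrow> k' ! i \<le> k ! i"
    and k'_eq: "\<And>i. i < p \<Longrightarrow> k' ! i < c - 1 \<Longrightarrow> k' ! i = k ! i"
    and b_ge: "\<And>j. j < q \<Longrightarrow> int j \<le> int q - c \<Longrightarrow> int p \<le> b ! j"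
  shows "list_all2 (\<lambda>x y. \<bar>x\<bar> \<le> \<bar>y\<bar>) (vminus b r') (vminus b r)"
proof -
  have lr: "length r = q" and lr': "length r' = q"
    using Om Om' by (simp_all add: in_Omega_def)
  show ?thesis
    unfolding list_all2_vminus_iff[OF lb lr' lb lr]
  proof (intro allI impI)
    fix j assume "j < q"
    show "\<bar>b ! j - r' ! j\<bar> \<le> \<bar>b ! j - r ! j\<bar>"
    proof (cases "int j \<le> int q - c")
      case True
      then show ?thesis
        using b_ge[OF \<open>j < q\<close>] in_Omega_nth_le[OF Om' \<open>j < q\<close>]
          in_Omega_dual_antimono[OF Om Om' k'_le \<open>j < q\<close>]
        by simp
    next
      case False
      then have "int (j + 1) \<le> int q - k' ! i \<longleftrightarrow> int (j + 1) \<le> int q - k ! i" if "i < p" for i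
        using k'_le[OF that] k'_eq[OF that] by force
      then have "{i. i < p \<and> int (j + 1) \<le> int q - k' ! i}
          = {i. i < p \<and> int (j + 1) \<le> int q - k ! i}"
        by blast
      then have "r' ! j = r ! j"
        using Om Om' \<open>j < q\<close> by (simp add: in_Omega_def)
      then show ?thesis
        by simp
    qed
  qed
qed

lemma minus_beta_sorted_nth_less:
  assumes "sorted_wrt (\<ge>) (minus_beta xs)" and "0 < i" and "i < length xs"
  shows "xs ! i < (xs ! 0 :: int)"
proof -
  have "0 < length xs" using assms(2,3) by linarith
  then show ?thesis
    using sorted_wrt_nth_less[OF assms(1), of 0 i] assms(2,3) by (simp add: minus_beta_def)
qed

lemma sum_list_take_le:
  fixes xs :: "'a::ordered_comm_monoid_add list"
  assumes "n \<le> length xs" and "\<And>i. i < n \<Longrightarrow> xs ! i \<le> c i"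
  shows "sum_list (take n xs) \<le> (\<Sum>i<n. c i)"
proof -
  have "sum_list (take n xs) = (\<Sum>i<n. xs ! i)"
    using assms(1) by (simp add: sum_list_sum_nth atLeast0LessThan min_absorb1)
  also have "\<dots> \<le> (\<Sum>i<n. c i)"
    using assms(2) by (rule sum_mono) simp
  finally show ?thesis .
qed

lemma Lambda_threshold_bound:
  fixes f g p q m :: nat and A B a0 :: int
  assumes A: "A \<le> int f * a0 - int f + 1"
    and B: "B \<le> 2 * (int p * int g) - int g + 1 - int p * int (g - m)"
    and m: "int m = int q - a0" and f: "1 \<le> f" "f \<le> p" and g: "1 \<le> g" "g \<le> q"
  shows "A + B \<le> 2 * int p * int q - 2 * (int p - int f) * (int q - int g)"
proof -
  have "int f * int g - int f * int m \<le> int f * int (g - m)"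
    by (simp add: right_diff_distrib[symmetric] mult_left_mono)
  also have "\<dots> \<le> int p * int (g - m)"
    using f by (intro mult_right_mono) auto
  finally have "int f * int g - int f * int m \<le> int p * int (g - m)" .
  moreover have "int f * int g \<le> int f * int q"
    using g by (intro mult_left_mono) auto
  moreover have "int f * a0 = int f * int q - int f * int m"
    using m by (simp add: right_diff_distrib[symmetric])
  moreover have "2 * int p * int q - 2 * (int p - int f) * (int q - int g)
      = 2 * (int p * int g) + 2 * (int f * int q) - 2 * (int f * int g)"
    by (simp add: algebra_simps)
  ultimately show ?thesis
    using A B f g by linarith
qed

(* In 1-based notation the conclusion reads b_{q-a_1+1} \<ge> p. *)
lemma Lambda_dR_weight_b_ge:
  assumes la: "length a = p" and lb: "length b = q"
    and f: "1 \<le> f" "f \<le> p" and g: "1 \<le> g" "g \<le> q"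
    and dom: "k_dominant a b" and dom_beta: "k_dominant (minus_beta a) (minus_beta b)"
    and Lam: "in_Lambda p q f g a b" and dR: "dR_weight p q a b"
  shows "int p \<le> b ! nat (int q - a ! 0)"
proof (rule ccontr)
  define m where "m = nat (int q - a ! 0)"
  have m: "m < q" "int m = int q - a ! 0"
    using dR by (auto simp: m_def dR_weight_def)
  assume "\<not> int p \<le> b ! nat (int q - a ! 0)"
  then have b_m: "b ! m < int p"
    by (simp add: m_def)
  have b_sorted: "sorted_wrt (\<ge>) b"
    using dom by (simp add: k_dominant_def)
  have m_pos: "0 < m"
    using b_m dR by (cases m) (auto simp: dR_weight_def)
  have b_le: "b ! j \<le> 2 * int p - 1 + of_bool (j = 0) - int p * of_bool (m \<le> j)"
    if "j < g" for j
  proof (cases "m \<le> j")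
    case True
    then show ?thesis
      using sorted_wrt_ge_nth_antimono[OF b_sorted True] b_m m_pos that g lb by auto
  next
    case False
    then show ?thesis
      using minus_beta_sorted_nth_less[of b j] dom_beta dR that g lb
      by (cases "j = 0") (auto simp: k_dominant_def dR_weight_def)
  qed
  have a_le: "a ! i \<le> a ! 0 - 1 + of_bool (i = 0)" if "i < f" for i
    using minus_beta_sorted_nth_less[of a i] dom_beta that f la
    by (cases "i = 0") (auto simp: k_dominant_def)
  have sum_b: "sum_list (take g b) \<le> 2 * (int p * int g) - int g + 1 - int p * int (g - m)"
  proof -
    have "{..<g} \<inter> {j. m \<le> j} = {m..<g}" by auto
    then show ?thesis
      using sum_list_take_le[of g b, OF _ b_le] g lb
      by (simp add: sum.distrib sum_subtractf algebra_simps)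
  qed
  have sum_a: "sum_list (take f a) \<le> int f * a ! 0 - int f + 1"
    using sum_list_take_le[of f a, OF _ a_le] f la by (simp add: sum.distrib) (simp add: algebra_simps)
  show False
    using Lambda_threshold_bound[OF sum_a sum_b m(2) f g] Lam by (simp add: in_Lambda_def)
qed

lemma dR_weight_Omega_descent:
  fixes a b k r :: "int list"
  assumes la: "length a = p" and lb: "length b = q"
    and dom: "k_dominant a b" and dom_beta: "k_dominant (minus_beta a) (minus_beta b)"
    and f: "1 \<le> f" "f \<le> p" and g: "1 \<le> g" "g \<le> q"
    and Lam: "in_Lambda p q f g a b" and Om: "in_Omega p q k r"
    and dR: "dR_weight p q a b" and a0_less: "a ! 0 < k ! 0"
  shows "\<exists>k' r'. in_Omega p q k' r' \<and>
    brace (vminus a k) (vminus b r) \<ggreater> brace (vminus a k') (vminus b r') \<and>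
    k' = lower_prefix (a ! 0) (last_ge k (a ! 0)) k"
proof -
  have lk: "length k = p" and k_sorted: "sorted_wrt (\<ge>) k"
    using Om by (auto simp: in_Omega_def)
  have "k \<noteq> []"
    using lk f by auto
  have a0_pos: "1 \<le> a ! 0"
    using dR by (simp add: dR_weight_def)
  define k' where "k' = lower_prefix (a ! 0) (last_ge k (a ! 0)) k"
  obtain r' where Om': "in_Omega p q k' r'"
    using in_Omega_lower_prefix[OF Om _ a0_pos] a0_less f unfolding k'_def by auto
  have k'_nth: "k' ! i = (if i = 0 then a ! 0 else if a ! 0 \<le> k ! i then a ! 0 - 1 else k ! i)"
    if "i < p" for i
    using nth_lower_prefix_last_ge[OF k_sorted \<open>k \<noteq> []\<close>] a0_less lk that by (simp add: k'_def)
  have a_head: "a ! i < a ! 0" if "0 < i" "i < length k" for i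
    using minus_beta_sorted_nth_less[of a i] dom_beta that la lk by (simp add: k_dominant_def)
  have "length a = length k"
    using la lk by simp
  note a_part = lower_prefix_abs_diff_le[OF k_sorted \<open>k \<noteq> []\<close> this a_head a0_less, folded k'_def]
  have b_ge: "int p \<le> b ! j" if "j < q" "int j \<le> int q - a ! 0" for j
  proof -
    have "j \<le> nat (int q - a ! 0)" "nat (int q - a ! 0) < q"
      using that a0_pos by linarith+
    then have "b ! nat (int q - a ! 0) \<le> b ! j"
      using sorted_wrt_ge_nth_antimono[of b] dom lb by (simp add: k_dominant_def)
    then show ?thesis
      using Lambda_dR_weight_b_ge[OF la lb f g dom dom_beta Lam dR] by simp
  qed
  have k'_le: "k' ! i \<le> k ! i" if "i < p" for i
    using k'_nth[OF that] a0_less by (simp split: if_splits)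
  have k'_eq: "k' ! i = k ! i" if "i < p" "k' ! i < a ! 0 - 1" for i
    using k'_nth[OF that(1)] that(2) by (simp split: if_splits)
  have "brace (vminus a k) (vminus b r) \<ggreater> brace (vminus a k') (vminus b r')"
    by (intro brace_gg_if_abs_le[OF a_part(1) in_Omega_abs_diff_dual_le[OF Om Om' lb k'_le k'_eq b_ge]]
        disjI1 a_part(2))
  with Om' show ?thesis
    by (auto simp: k'_def)
qed

lemma k_dominant_swap: "k_dominant xs ys \<longleftrightarrow> k_dominant ys xs"
  by (auto simp: k_dominant_def)

lemma in_Lambda_swap: "in_Lambda p q f g a b \<longleftrightarrow> in_Lambda q p g f b a"
  unfolding in_Lambda_def k_dominant_swap[of a b] by (simp add: algebra_simps)

lemma dL_weight_iff_dR_weight_swap: "dL_weight p q a b \<longleftrightarrow> dR_weight q p b a"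
  by (auto simp: dL_weight_def dR_weight_def)

theorem lemma3p2:
  fixes p q f g :: nat and a b k r :: "int list"
  assumes "1 \<le> p" and "p \<le> q"
    and "length a = p" and "length b = q"
    and "k_dominant a b"
    and "k_dominant (minus_beta a) (minus_beta b)"
    and "1 \<le> f" and "f \<le> p" and "1 \<le> g" and "g \<le> q"
    and "in_Lambda p q f g a b"
    and "in_Omega p q k r"
  shows "(dR_weight p q a b \<and> k ! 0 > a ! 0 \<longrightarrow>
            (\<exists>k' r'. in_Omega p q k' r' \<and>
               brace (vminus a k) (vminus b r) \<ggreater> brace (vminus a k') (vminus b r') \<and>
               k' = a ! 0 # replicate (last_ge k (a ! 0) - 1) (a ! 0 - 1)
                      @ drop (last_ge k (a ! 0)) k))
       \<and> (dL_weight p q a b \<and> r ! 0 > b ! 0 \<longrightarrow>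
            (\<exists>k' r'. in_Omega p q k' r' \<and>
               brace (vminus a k) (vminus b r) \<ggreater> brace (vminus a k') (vminus b r') \<and>
               r' = b ! 0 # replicate (last_ge r (b ! 0) - 1) (b ! 0 - 1)
                      @ drop (last_ge r (b ! 0)) r))"
proof (intro conjI impI, goal_cases)
  case 1
  then show ?case
    using dR_weight_Omega_descent[OF assms(3-12)] by (simp add: lower_prefix_def)
next
  case 2
  then have "dR_weight q p b a"
    by (simp add: dL_weight_iff_dR_weight_swap)
  from dR_weight_Omega_descent[OF assms(4,3) k_dominant_swap[THEN iffD1, OF assms(5)]
      k_dominant_swap[THEN iffD1, OF assms(6)] assms(9,10,7,8) in_Lambda_swap[THEN iffD1, OF assms(11)]
      in_Omega_swap[OF assms(12)] this] 2
  obtain r' k' where Om': "in_Omega q p r' k'"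
    and gg: "brace (vminus b r) (vminus a k) \<ggreater> brace (vminus b r') (vminus a k')"
    and r': "r' = lower_prefix (b ! 0) (last_ge r (b ! 0)) r"
    by blast
  have len: "length (vminus b r) = length (vminus b r')" "length (vminus a k) = length (vminus a k')"
    using Om' assms(12) by (simp_all add: in_Omega_def vminus_def)
  from gg have "brace (vminus a k) (vminus b r) \<ggreater> brace (vminus a k') (vminus b r')"
    unfolding brace_gg_swap[OF len] .
  with Om' r' show ?case
    using in_Omega_swap[OF Om'] by (auto simp: lower_prefix_def)
qed

end
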